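(* Let $n\ge3$ and $\ell\in\{1,\dots,n-2\}$. Define $$K^\pm_\ell=\big(\Gamma_{\{\ell+1,\ell+2\}}\pm\Gamma_{[\ell+2]\setminus\{\ell+1\}}\big)\big(\Gamma_{[\ell+1]}\mp\tfrac12\big)-\big(\Gamma_{\{\ell+2\}}\pm\Gamma_{[\ell+2]}\big)\big(\Gamma_{[\ell]}\pm\Gamma_{\{\ell+1\}}\big).$$ Then $[K^\pm_\ell,\Gamma_{[j]}]=0$ for all $j\in[n]$ with $j\ne\ell+1$, and $\{K^\pm_\ell,\Gamma_{[\ell+1]}\}=\pm K^\pm_\ell$.
   Context: Fix $n\ge1$ and real parameters $\mu_1,\dots,\mu_n>0$; write $[\ell]=\{1,\dots,\ell\}$. For $i\in[n]$, $r_i$ is the reflection $(r_if)(x)=f(x_1,\dots,-x_i,\dots,x_n)$ and $T_i=\partial_{x_i}+\frac{\mu_i}{x_i}(1-r_i)$. $\mathcal{C}\ell_n$ is generated by $e_1,\dots,e_n$ with $e_ie_j+e_je_i=-2\delta_{ij}$, $V$ is a fixed left $\mathcal{C}\ell_n$-module, and operators act on $\mathcal{P}(\mathbb{R}^n)\otimes V$ with $x_i,T_i,r_i$ acting on the polynomial factor and $e_i$ on $V$. For $A\subseteq[n]$: $\underline{D}_A=\sum_{i\in A}e_iT_i$, $\underline{x}_A=\sum_{i\in A}e_ix_i$, $\underline{S}_A=\frac12([\underline{x}_A,\underline{D}_A]-1)$, $\Gamma_A=\underline{S}_A\prod_{i\in A}r_i$ (empty sums $0$, empty products $1$); note $\Gamma_{\{k\}}=\mu_k$.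 $\{X,Y\}=XY+YX$. *)

theory Defs
  imports Complex_Main
begin

text \<open>
  A polynomial with values in V is encoded by its coefficient map:
  a function c from multi-indices (alpha :: nat => nat, variable x_i corresponds to index i,
  i in {1..n}) to V, representing sum_alpha x^alpha (x) c(alpha).  The space P(R^n) (x) V is
  the set of such maps with finite support and with alpha k = 0 for k outside {1..n}
  (see poly_space).
\<close>

type_synonym 'v pv = "(nat \<Rightarrow> nat) \<Rightarrow> 'v"
type_synonym 'v op = "'v pv \<Rightarrow> 'v pv"

definition poly_space :: "nat \<Rightarrow> ('v::real_vector) pv set" where
  "poly_space n = {f. finite {\<alpha>. f \<alpha> \<noteq> 0} \<and>
                      (\<forall>\<alpha>. f \<alpha> \<noteq> 0 \<longrightarrow> (\<forall>k. k \<notin> {1..n} \<longrightarrow> \<alpha> k = 0))}"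

definition clifford_module :: "nat \<Rightarrow> (nat \<Rightarrow> 'v::real_vector \<Rightarrow> 'v) \<Rightarrow> bool" where
  "clifford_module n e \<longleftrightarrow> (\<forall>i\<in>{1..n}. linear (e i)) \<and>
     (\<forall>i\<in>{1..n}. \<forall>j\<in>{1..n}. \<forall>v. e i (e j v) + e j (e i v) = (if i = j then (-2) *\<^sub>R v else 0))"

definition op_plus :: "('v::real_vector) op \<Rightarrow> 'v op \<Rightarrow> 'v op" where
  "op_plus A B = (\<lambda>f \<alpha>. A f \<alpha> + B f \<alpha>)"
definition op_minus :: "('v::real_vector) op \<Rightarrow> 'v op \<Rightarrow> 'v op" where
  "op_minus A B = (\<lambda>f \<alpha>. A f \<alpha> - B f \<alpha>)"
definition op_scale :: "real \<Rightarrow> ('v::real_vector) op \<Rightarrow> 'v op" where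
  "op_scale c A = (\<lambda>f \<alpha>. c *\<^sub>R A f \<alpha>)"
definition commutator :: "('v::real_vector) op \<Rightarrow> 'v op \<Rightarrow> 'v op" where
  "commutator A B = op_minus (A \<circ> B) (B \<circ> A)"
definition anticommutator :: "('v::real_vector) op \<Rightarrow> 'v op \<Rightarrow> 'v op" where
  "anticommutator A B = op_plus (A \<circ> B) (B \<circ> A)"

text \<open>Multiplication by x_i, reflection r_i, partial derivative, and division by x_i
  (the latter is exact division on the image of 1 - r_i, where all coefficients with
  alpha_i = 0 vanish).\<close>
definition mulx :: "nat \<Rightarrow> ('v::real_vector) op" where
  "mulx i f \<alpha> = (if \<alpha> i = 0 then 0 else f (\<alpha>(i := \<alpha> i - 1)))"
definition refl :: "nat \<Rightarrow> ('v::real_vector) op" where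
  "refl i f \<alpha> = ((-1) ^ (\<alpha> i)) *\<^sub>R f \<alpha>"
definition pderiv_op :: "nat \<Rightarrow> ('v::real_vector) op" where
  "pderiv_op i f \<alpha> = real (\<alpha> i + 1) *\<^sub>R f (\<alpha>(i := \<alpha> i + 1))"
definition divx :: "nat \<Rightarrow> ('v::real_vector) op" where
  "divx i f \<alpha> = f (\<alpha>(i := \<alpha> i + 1))"

definition dunkl :: "(nat \<Rightarrow> real) \<Rightarrow> nat \<Rightarrow> ('v::real_vector) op" where
  "dunkl \<mu> i = op_plus (pderiv_op i) (op_scale (\<mu> i) (divx i \<circ> op_minus id (refl i)))"

definition cliff :: "(nat \<Rightarrow> 'v \<Rightarrow> 'v) \<Rightarrow> nat \<Rightarrow> ('v::real_vector) op" where
  "cliff e i f \<alpha> = e i (f \<alpha>)"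

definition dirac :: "(nat \<Rightarrow> real) \<Rightarrow> (nat \<Rightarrow> 'v \<Rightarrow> 'v) \<Rightarrow> nat set \<Rightarrow> ('v::real_vector) op" where
  "dirac \<mu> e A = (\<lambda>f \<alpha>. \<Sum>i\<in>A. (cliff e i \<circ> dunkl \<mu> i) f \<alpha>)"

definition xvec :: "(nat \<Rightarrow> 'v \<Rightarrow> 'v) \<Rightarrow> nat set \<Rightarrow> ('v::real_vector) op" where
  "xvec e A = (\<lambda>f \<alpha>. \<Sum>i\<in>A. (cliff e i \<circ> mulx i) f \<alpha>)"

definition S_op :: "(nat \<Rightarrow> real) \<Rightarrow> (nat \<Rightarrow> 'v \<Rightarrow> 'v) \<Rightarrow> nat set \<Rightarrow> ('v::real_vector) op" where
  "S_op \<mu> e A = op_scale (1/2) (op_minus (commutator (xvec e A) (dirac \<mu> e A)) id)"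

text \<open>Product of the reflections r_i, i in A (in increasing order; they commute).\<close>
definition refl_prod :: "nat set \<Rightarrow> ('v::real_vector) op" where
  "refl_prod A = foldr (\<lambda>i g. refl i \<circ> g) (sorted_list_of_set A) id"

definition Gamma :: "(nat \<Rightarrow> real) \<Rightarrow> (nat \<Rightarrow> 'v \<Rightarrow> 'v) \<Rightarrow> nat set \<Rightarrow> ('v::real_vector) op" where
  "Gamma \<mu> e A = S_op \<mu> e A \<circ> refl_prod A"

text \<open>K^{+-}_l, with the sign +- encoded by s in {1, -1}.\<close>
definition K_op :: "(nat \<Rightarrow> real) \<Rightarrow> (nat \<Rightarrow> 'v \<Rightarrow> 'v) \<Rightarrow> real \<Rightarrow> nat \<Rightarrow> ('v::real_vector) op" where
  "K_op \<mu> e s l =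
     op_minus
       (op_plus (Gamma \<mu> e {l+1, l+2}) (op_scale s (Gamma \<mu> e ({1..l+2} - {l+1})))
        \<circ> op_minus (Gamma \<mu> e {1..l+1}) (op_scale (s/2) id))
       (op_plus (Gamma \<mu> e {l+2}) (op_scale s (Gamma \<mu> e {1..l+2}))
        \<circ> op_plus (Gamma \<mu> e {1..l}) (op_scale s (Gamma \<mu> e {l+1})))"

end

theory Submission
  imports Defs
begin

text \<open>
  For a block \<open>A\<close> of indices write \<open>x\<^sub>A\<close>, \<open>D\<^sub>A\<close> and \<open>r\<^sub>A\<close> for the Clifford-valued position
  vector, the Dunkl--Dirac operator and the product of the reflections.  Since
  \<open>[T\<^sub>i, x\<^sub>i] = 1 + 2\<mu>\<^sub>i r\<^sub>i\<close> with \<open>r\<^sub>i\<close> anticommuting with \<open>x\<^sub>i\<close> and \<open>T\<^sub>i\<close>, the operators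
  \<open>x\<^sub>A\<close> and \<open>D\<^sub>A\<close> satisfy the \<open>osp(1|2)\<close> relations \<open>{x\<^sub>A, [x\<^sub>A, D\<^sub>A]} = 2 x\<^sub>A\<close> and
  \<open>{D\<^sub>A, [x\<^sub>A, D\<^sub>A]} = 2 D\<^sub>A\<close>; moreover \<open>r\<^sub>A\<close> anticommutes with them, and the odd operators
  of disjoint blocks anticommute.  These relations alone show that \<open>2\<Gamma>\<^sub>A = ([x\<^sub>A, D\<^sub>A] - 1) r\<^sub>A\<close>
  commutes with \<open>x\<^sub>A\<close>, \<open>D\<^sub>A\<close>, \<open>r\<^sub>A\<close> and with everything built from a disjoint block, so
  \<open>\<Gamma>\<^sub>A\<close> and \<open>\<Gamma>\<^sub>B\<close> commute whenever \<open>A\<close> and \<open>B\<close> are nested or disjoint; and a normal-ordering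
  computation in the algebra they generate gives, for disjoint \<open>A\<close>, \<open>B\<close>, \<open>C\<close>, the Racah-type
  relation \<open>{\<Gamma>\<^sub>B\<^sub>C, \<Gamma>\<^sub>A\<^sub>B} = \<Gamma>\<^sub>A\<^sub>C + 2\<Gamma>\<^sub>B \<Gamma>\<^sub>A\<^sub>B\<^sub>C + 2\<Gamma>\<^sub>A \<Gamma>\<^sub>C\<close>.  With \<open>A = [\<ell>]\<close>, \<open>B = {\<ell>+1}\<close>,
  \<open>C = {\<ell>+2}\<close>, this relation and the one with \<open>A\<close> and \<open>B\<close> exchanged yield
  \<open>{K\<^sup>\<plusminus>, \<Gamma>\<^bsub>[\<ell>+1]\<^esub>} = \<plusminus>K\<^sup>\<plusminus>\<close> by a direct computation, while \<open>[j]\<close> is nested in or disjoint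
  from every set occurring in \<open>K\<^sup>\<plusminus>\<close> when \<open>j \<noteq> \<ell>+1\<close>.
\<close>

section \<open>Commutation in rings\<close>

definition commute :: "'a::ring \<Rightarrow> 'a \<Rightarrow> bool" where
  "commute a b \<longleftrightarrow> a * b = b * a"

definition anticommute :: "'a::ring \<Rightarrow> 'a \<Rightarrow> bool" where
  "anticommute a b \<longleftrightarrow> a * b = - (b * a)"

lemma commute_sym: "commute a b \<Longrightarrow> commute b a"
  by (simp add: commute_def)

lemma anticommute_sym: "anticommute a b \<Longrightarrow> anticommute b a"
  by (simp add: anticommute_def)

lemma commute_refl: "commute a a"
  by (simp add: commute_def)

lemma commute_one: "commute a (1::'a::{ring,monoid_mult})"
  by (simp add: commute_def)

lemma commute_add: "commute a b \<Longrightarrow> commute a c \<Longrightarrow> commute a (b + c)"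
  and commute_diff: "commute a b \<Longrightarrow> commute a c \<Longrightarrow> commute a (b - c)"
  by (simp_all add: commute_def algebra_simps)

lemma commute_scaleR: "commute (a::'a::real_algebra) b \<Longrightarrow> commute a (c *\<^sub>R b)"
  by (simp add: commute_def)

lemma commute_mult: "commute a b \<Longrightarrow> commute a c \<Longrightarrow> commute a (b * c)"
  by (simp add: commute_def) (metis mult.assoc)

lemma commute_mult_anticommute: "anticommute a b \<Longrightarrow> anticommute a c \<Longrightarrow> commute a (b * c)"
  by (simp add: commute_def anticommute_def) (metis mult.assoc mult_minus_left mult_minus_right minus_minus)

lemma anticommute_mult_commute_left: "anticommute a b \<Longrightarrow> commute a c \<Longrightarrow> anticommute a (b * c)"
  and anticommute_mult_commute_right: "commute a b \<Longrightarrow> anticommute a c \<Longrightarrow> anticommute a (b * c)"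
  by (simp_all add: commute_def anticommute_def) (metis mult.assoc mult_minus_left mult_minus_right)+

lemma commute_sum: "(\<And>i. i \<in> X \<Longrightarrow> commute a (f i)) \<Longrightarrow> commute a (sum f X)"
  by (induction X rule: infinite_finite_induct) (auto simp: commute_def algebra_simps)

lemma anticommute_sum: "(\<And>i. i \<in> X \<Longrightarrow> anticommute a (f i)) \<Longrightarrow> anticommute a (sum f X)"
  by (induction X rule: infinite_finite_induct) (auto simp: anticommute_def algebra_simps)

lemma sl2_relations:
  fixes t m c :: "'a::{ring,monoid_mult}"
  assumes tm: "t * m - m * t = 1 + c" and "anticommute c m" and "anticommute c t"
  shows "(m * t + t * m) * m - m * (m * t + t * m) = m + m"
    and "t * (m * t + t * m) - (m * t + t * m) * t = t + t"
proof -
  have "(m * t + t * m) * m - m * (m * t + t * m) = (t * m - m * t) * m + m * (t * m - m * t)"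
    by (simp add: algebra_simps)
  then show "(m * t + t * m) * m - m * (m * t + t * m) = m + m"
    using assms(2) by (simp add: tm algebra_simps anticommute_def)
  have "t * (m * t + t * m) - (m * t + t * m) * t = t * (t * m - m * t) + (t * m - m * t) * t"
    by (simp add: algebra_simps)
  then show "t * (m * t + t * m) - (m * t + t * m) * t = t + t"
    using assms(3) by (simp add: tm algebra_simps anticommute_def)
qed

lemma anticommute_sum_sum:
  "(\<And>i j. i \<in> X \<Longrightarrow> j \<in> Y \<Longrightarrow> anticommute (f i) (g j)) \<Longrightarrow> anticommute (sum f X) (sum g Y)"
  by (auto intro!: anticommute_sum intro: anticommute_sym)

lemma commutator_sum_single:
  assumes "finite X" "j \<in> X" "\<And>i. i \<in> X \<Longrightarrow> i \<noteq> j \<Longrightarrow> commute a (b i)"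
  shows "sum b X * a - a * sum b X = b j * a - a * b j"
proof -
  have "commute a (sum b (X - {j}))"
    using assms(3) by (auto intro: commute_sum)
  then show ?thesis
    using assms(1,2) by (simp add: sum.remove commute_def algebra_simps)
qed

lemma sum_anticommutator_diagonal:
  fixes a b :: "nat \<Rightarrow> 'a::ring"
  assumes "finite X" "\<And>i j. i \<in> X \<Longrightarrow> j \<in> X \<Longrightarrow> i \<noteq> j \<Longrightarrow> a i * b j + b j * a i = 0"
  shows "sum a X * sum b X + sum b X * sum a X = (\<Sum>i\<in>X. a i * b i + b i * a i)"
proof -
  have "sum a X * sum b X + sum b X * sum a X = (\<Sum>i\<in>X. \<Sum>j\<in>X. a i * b j + b j * a i)"
    by (simp add: sum_product sum.distrib sum.swap[of "\<lambda>i j. b i * a j"])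
  also have "\<dots> = (\<Sum>i\<in>X. a i * b i + b i * a i)"
    using assms by (intro sum.cong refl) (simp add: sum.remove)
  finally show ?thesis .
qed

section \<open>The Racah relation for abstract blocks\<close>

definition twice_gamma :: "'a::{ring,monoid_mult} \<Rightarrow> 'a \<Rightarrow> 'a \<Rightarrow> 'a" where
  "twice_gamma x d r = (x * d - d * x - 1) * r"

lemma commute_twice_gamma:
  "commute a x \<Longrightarrow> commute a d \<Longrightarrow> commute a r \<Longrightarrow> commute a (twice_gamma x d r)"
  unfolding twice_gamma_def by (intro commute_mult commute_diff commute_one)

lemma commute_twice_gamma_odd:
  "anticommute a x \<Longrightarrow> anticommute a d \<Longrightarrow> commute a r \<Longrightarrow> commute a (twice_gamma x d r)"
  unfolding twice_gamma_def by (intro commute_mult commute_diff commute_mult_anticommute commute_one)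

lemma commute_twice_gamma_self:
  assumes "anticommute r a" and "a * (x * d - d * x) + (x * d - d * x) * a = a + a"
  shows "commute a (twice_gamma x d r)"
proof -
  have "a * (x * d - d * x - 1) = - ((x * d - d * x - 1) * a)"
    using assms(2) by (simp add: algebra_simps)
  then show ?thesis
    using assms(1) by (simp add: commute_def anticommute_def twice_gamma_def flip: mult.assoc)
      (simp add: mult.assoc)
qed

text \<open>
  The generator \<open>g\<close> stands for \<open>twice_gamma x d r\<close>.  Kept as a separate generator, every relation
  below rewrites a product into the order \<open>g, x, d, r\<close> within a block and into the order of the
  blocks across blocks; the simplifier normalises both sides of \<open>racah_relation\<close> this way.
\<close>

locale gamma_block =
  fixes g x d r :: "'a::{ring,monoid_mult}"
  assumes r_r: "r * r = 1"
    and r_x: "r * x = - (x * r)"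
    and r_d: "r * d = - (d * r)"
    and x_g: "x * g = g * x"
    and d_g: "d * g = g * d"
    and r_g: "r * g = g * r"
    and d_x: "d * x = x * d - g * r - 1"
begin
lemmas rules = r_r r_x r_d x_g d_g r_g d_x
end

locale gamma_block_pair =
  fixes g x d r g' x' d' r' :: "'a::{ring,monoid_mult}"
  assumes g'_g: "g' * g = g * g'" and g'_x: "g' * x = x * g'"
    and g'_d: "g' * d = d * g'" and g'_r: "g' * r = r * g'"
    and x'_g: "x' * g = g * x'" and x'_x: "x' * x = - (x * x')"
    and x'_d: "x' * d = - (d * x')" and x'_r: "x' * r = r * x'"
    and d'_g: "d' * g = g * d'" and d'_x: "d' * x = - (x * d')"
    and d'_d: "d' * d = - (d * d')" and d'_r: "d' * r = r * d'"
    and r'_g: "r' * g = g * r'" and r'_x: "r' * x = x * r'"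
    and r'_d: "r' * d = d * r'" and r'_r: "r' * r = r * r'"
begin
lemmas rules = g'_g g'_x g'_d g'_r x'_g x'_x x'_d x'_r d'_g d'_x d'_d d'_r r'_g r'_x r'_d r'_r
end

lemma gamma_block_twice_gamma:
  assumes "r * r = 1" and "anticommute r x" and "anticommute r d"
    and "x * (x * d - d * x) + (x * d - d * x) * x = x + x"
    and "d * (x * d - d * x) + (x * d - d * x) * d = d + d"
  shows "gamma_block (twice_gamma x d r) x d r"
proof
  show "x * twice_gamma x d r = twice_gamma x d r * x" "d * twice_gamma x d r = twice_gamma x d r * d"
    using commute_twice_gamma_self[OF assms(2) assms(4)] commute_twice_gamma_self[OF assms(3) assms(5)]
    by (simp_all add: commute_def)
  show "r * twice_gamma x d r = twice_gamma x d r * r"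
    using commute_twice_gamma_odd[OF assms(2,3) commute_refl] by (simp add: commute_def)
  show "d * x = x * d - twice_gamma x d r * r - 1"
    using assms(1) by (simp add: twice_gamma_def mult.assoc)
qed (use assms(1-3) in \<open>simp_all add: anticommute_def\<close>)

lemma gamma_block_pair_twice_gamma:
  assumes "anticommute x' x" "anticommute x' d" "anticommute d' x" "anticommute d' d"
    and "commute r' x" "commute r' d" "commute r x'" "commute r d'" "commute r' r"
  shows "gamma_block_pair (twice_gamma x d r) x d r (twice_gamma x' d' r') x' d' r'"
proof -
  have xd_g': "commute x (twice_gamma x' d' r')" "commute d (twice_gamma x' d' r')"
    using assms by (auto intro!: commute_twice_gamma_odd intro: anticommute_sym commute_sym)
  have r_g': "commute r (twice_gamma x' d' r')"
    using assms by (auto intro!: commute_twice_gamma intro: commute_sym)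
  have x'd'_g: "commute x' (twice_gamma x d r)" "commute d' (twice_gamma x d r)"
    using assms by (auto intro!: commute_twice_gamma_odd intro: commute_sym)
  have r'_g: "commute r' (twice_gamma x d r)"
    using assms by (auto intro!: commute_twice_gamma)
  have "commute (twice_gamma x' d' r') (twice_gamma x d r)"
    using xd_g' r_g' by (auto intro!: commute_twice_gamma intro: commute_sym)
  with xd_g' r_g' x'd'_g r'_g show ?thesis
    using assms by unfold_locales (auto simp: commute_def anticommute_def)
qed

lemma mult_assoc_rule: "u * v = w \<Longrightarrow> u * (v * z) = w * (z::'a::semigroup_mult)"
  by (simp add: mult.assoc[symmetric])

locale gamma_block_triple =
  A: gamma_block gA xA dA rA + B: gamma_block gB xB dB rB + C: gamma_block gC xC dC rC
  + AB: gamma_block_pair gA xA dA rA gB xB dB rB + AC: gamma_block_pair gA xA dA rA gC xC dC rC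
  + BC: gamma_block_pair gB xB dB rB gC xC dC rC
  for gA xA dA rA gB xB dB rB gC xC dC rC :: "'a::{ring,monoid_mult}"
begin

lemma racah_relation:
  "twice_gamma (xB + xC) (dB + dC) (rB * rC) * twice_gamma (xA + xB) (dA + dB) (rA * rB)
     + twice_gamma (xA + xB) (dA + dB) (rA * rB) * twice_gamma (xB + xC) (dB + dC) (rB * rC)
   = twice_gamma (xA + xC) (dA + dC) (rA * rC) + twice_gamma (xA + xC) (dA + dC) (rA * rC)
     + gB * twice_gamma (xA + xB + xC) (dA + dB + dC) (rA * rB * rC)
     + gB * twice_gamma (xA + xB + xC) (dA + dB + dC) (rA * rB * rC)
     + gA * gC + gA * gC"
proof -
  note rules = A.rules B.rules C.rules AB.rules AC.rules BC.rules
  show ?thesis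
    unfolding twice_gamma_def
    by (simp add: distrib_left distrib_right left_diff_distrib right_diff_distrib mult.assoc
        rules rules[THEN mult_assoc_rule])
qed

end

lemma anticommutator_shift:
  fixes X T Q :: "'a::{real_algebra,monoid_mult}"
  assumes XQ: "X * Q + Q * X = s *\<^sub>R X + 2 *\<^sub>R T" and TQ: "T * Q = Q * T"
  shows "(X * (Q - (s / 2) *\<^sub>R 1) - T) * Q + Q * (X * (Q - (s / 2) *\<^sub>R 1) - T)
       = s *\<^sub>R (X * (Q - (s / 2) *\<^sub>R 1) - T)"
proof -
  have "(X * (Q - (s / 2) *\<^sub>R 1) - T) * Q + Q * (X * (Q - (s / 2) *\<^sub>R 1) - T)
      = (X * Q + Q * X) * (Q - (s / 2) *\<^sub>R 1) - (T * Q + Q * T)"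
    by (simp add: algebra_simps)
  also have "\<dots> = (s *\<^sub>R X + 2 *\<^sub>R T) * (Q - (s / 2) *\<^sub>R 1) - (T * Q + T * Q)"
    by (simp only: XQ TQ)
  also have "\<dots> = s *\<^sub>R (X * (Q - (s / 2) *\<^sub>R 1) - T)"
    by (simp add: algebra_simps scaleR_2 flip: scaleR_add_left)
  finally show ?thesis .
qed

lemma anticommutator_K:
  fixes U W Q P B C R :: "'a::{real_algebra,monoid_mult}" and s :: real
  assumes "s * s = 1"
    and UQ: "U * Q + Q * U = W + 2 *\<^sub>R (B * R + P * C)"
    and WQ: "W * Q + Q * W = U + 2 *\<^sub>R (P * R + B * C)"
    and "commute Q P" "commute Q B" "commute Q C" "commute Q R"
    and "commute B R" "commute P C" "commute P R" "commute B C"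
  shows "((U + s *\<^sub>R W) * (Q - (s / 2) *\<^sub>R 1) - (C + s *\<^sub>R R) * (P + s *\<^sub>R B)) * Q
       + Q * ((U + s *\<^sub>R W) * (Q - (s / 2) *\<^sub>R 1) - (C + s *\<^sub>R R) * (P + s *\<^sub>R B))
       = s *\<^sub>R ((U + s *\<^sub>R W) * (Q - (s / 2) *\<^sub>R 1) - (C + s *\<^sub>R R) * (P + s *\<^sub>R B))"
proof (rule anticommutator_shift)
  have T: "(C + s *\<^sub>R R) * (P + s *\<^sub>R B) = B * R + P * C + s *\<^sub>R (P * R + B * C)"
    using assms(1,8-11) by (simp add: commute_def algebra_simps)
  have "(U + s *\<^sub>R W) * Q + Q * (U + s *\<^sub>R W) = (U * Q + Q * U) + s *\<^sub>R (W * Q + Q * W)"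
    by (simp add: algebra_simps)
  also have "\<dots> = s *\<^sub>R (U + s *\<^sub>R W) + 2 *\<^sub>R ((C + s *\<^sub>R R) * (P + s *\<^sub>R B))"
    unfolding UQ WQ T using assms(1) by (simp add: algebra_simps)
  finally show "(U + s *\<^sub>R W) * Q + Q * (U + s *\<^sub>R W)
      = s *\<^sub>R (U + s *\<^sub>R W) + 2 *\<^sub>R ((C + s *\<^sub>R R) * (P + s *\<^sub>R B))" .
  show "(C + s *\<^sub>R R) * (P + s *\<^sub>R B) * Q = Q * ((C + s *\<^sub>R R) * (P + s *\<^sub>R B))"
    using assms(4-7) unfolding commute_def[symmetric]
    by (intro commute_sym[of Q] commute_mult commute_add commute_scaleR)
qed

section \<open>Linear operators on coefficient maps\<close>

definition op_linear :: "('v::real_vector) op \<Rightarrow> bool" where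
  "op_linear A \<longleftrightarrow> (\<forall>f g. A (\<lambda>\<alpha>. f \<alpha> + g \<alpha>) = (\<lambda>\<alpha>. A f \<alpha> + A g \<alpha>))
                   \<and> (\<forall>c f. A (\<lambda>\<alpha>. c *\<^sub>R f \<alpha>) = (\<lambda>\<alpha>. c *\<^sub>R A f \<alpha>))"

lemma op_linear_add: "op_linear A \<Longrightarrow> A (\<lambda>\<alpha>. f \<alpha> + g \<alpha>) = (\<lambda>\<alpha>. A f \<alpha> + A g \<alpha>)"
  and op_linear_scaleR: "op_linear A \<Longrightarrow> A (\<lambda>\<alpha>. c *\<^sub>R f \<alpha>) = (\<lambda>\<alpha>. c *\<^sub>R A f \<alpha>)"
  by (simp_all add: op_linear_def)

lemma op_linear_diff: "op_linear A \<Longrightarrow> A (\<lambda>\<alpha>. f \<alpha> - g \<alpha>) = (\<lambda>\<alpha>. A f \<alpha> - A g \<alpha>)"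
  using op_linear_add[of A f "\<lambda>\<alpha>. (-1) *\<^sub>R g \<alpha>"] op_linear_scaleR[of A "-1" g] by simp

text \<open>
  Composition distributes over addition only for linear maps, hence the subtype.  It is a real
  algebra but not a \<open>ring_1\<close>: it is the zero ring when \<open>'v\<close> is trivial.
\<close>

typedef (overloaded) ('v::real_vector) lop = "{A :: 'v op. op_linear A}"
  morphisms rep Abs_lop
  by (rule exI[of _ id]) (simp add: op_linear_def)

setup_lifting type_definition_lop

instantiation lop :: (real_vector) "{real_algebra, monoid_mult}"
begin
lift_definition zero_lop :: "'a lop" is "\<lambda>f \<alpha>. 0" by (simp add: op_linear_def)
lift_definition one_lop :: "'a lop" is id by (simp add: op_linear_def)
lift_definition plus_lop :: "'a lop \<Rightarrow> 'a lop \<Rightarrow> 'a lop" is "\<lambda>A B f \<alpha>. A f \<alpha> + B f \<alpha>"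
  by (simp add: op_linear_def algebra_simps)
lift_definition uminus_lop :: "'a lop \<Rightarrow> 'a lop" is "\<lambda>A f \<alpha>. - A f \<alpha>"
  by (simp add: op_linear_def algebra_simps)
lift_definition minus_lop :: "'a lop \<Rightarrow> 'a lop \<Rightarrow> 'a lop" is "\<lambda>A B f \<alpha>. A f \<alpha> - B f \<alpha>"
  by (simp add: op_linear_def algebra_simps)
lift_definition scaleR_lop :: "real \<Rightarrow> 'a lop \<Rightarrow> 'a lop" is "\<lambda>c A f \<alpha>. c *\<^sub>R A f \<alpha>"
  by (simp add: op_linear_def algebra_simps)
lift_definition times_lop :: "'a lop \<Rightarrow> 'a lop \<Rightarrow> 'a lop" is "(\<circ>)"
  by (simp add: op_linear_def)
instance
  by intro_classes
    (transfer; auto simp: op_linear_add op_linear_diff op_linear_scaleR algebra_simps fun_eq_iff)+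
end

lemma rep_mult: "rep (a * b) = rep a \<circ> rep b"
  and rep_add: "rep (a + b) = (\<lambda>f \<alpha>. rep a f \<alpha> + rep b f \<alpha>)"
  and rep_diff: "rep (a - b) = (\<lambda>f \<alpha>. rep a f \<alpha> - rep b f \<alpha>)"
  and rep_uminus: "rep (- a) = (\<lambda>f \<alpha>. - rep a f \<alpha>)"
  and rep_scaleR: "rep (c *\<^sub>R a) = (\<lambda>f \<alpha>. c *\<^sub>R rep a f \<alpha>)"
  and rep_zero: "rep 0 = (\<lambda>f \<alpha>. 0)"
  and rep_one: "rep 1 = id"
  by (transfer; simp)+

lemmas rep_simps = rep_mult rep_add rep_diff rep_uminus rep_scaleR rep_zero rep_one comp_apply id_apply

lemma lop_eqI: "(\<And>f \<alpha>. rep a f \<alpha> = rep b f \<alpha>) \<Longrightarrow> a = b"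
  by (metis rep_inject ext)

lemma rep_sum: "rep (sum a X) = (\<lambda>f \<alpha>. \<Sum>i\<in>X. rep (a i) f \<alpha>)"
  by (induction X rule: infinite_finite_induct) (auto simp: rep_zero rep_add)

lemma rep_Abs_lop: "op_linear A \<Longrightarrow> rep (Abs_lop A) = A"
  by (simp add: Abs_lop_inverse)

lemma commutator_rep: "commutator (rep a) (rep b) = rep (a * b - b * a)"
  and anticommutator_rep: "anticommutator (rep a) (rep b) = rep (a * b + b * a)"
  and op_scale_rep: "op_scale c (rep a) = rep (c *\<^sub>R a)"
  by (simp_all add: commutator_def anticommutator_def op_minus_def op_plus_def op_scale_def rep_simps comp_def)

section \<open>Dunkl, reflection and Clifford operators\<close>

text \<open>\<open>T\<^sub>i x\<^sub>i\<^sup>k\<^sup>+\<^sup>1 = dunkl_coeff \<mu> i k \<cdot> x\<^sub>i\<^sup>k\<close>.\<close>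

definition dunkl_coeff :: "(nat \<Rightarrow> real) \<Rightarrow> nat \<Rightarrow> nat \<Rightarrow> real" where
  "dunkl_coeff \<mu> i k = real (k + 1) + (if even k then 2 * \<mu> i else 0)"

lemma dunkl_eq: "dunkl \<mu> i f \<alpha> = dunkl_coeff \<mu> i (\<alpha> i) *\<^sub>R f (\<alpha>(i := \<alpha> i + 1))"
  by (simp add: dunkl_def op_plus_def op_scale_def pderiv_op_def divx_def op_minus_def refl_def
      dunkl_coeff_def algebra_simps scaleR_add_left[symmetric] scaleR_diff_left[symmetric]
      del: scaleR_add_left scaleR_diff_left)

lemma refl_prod_eq: "refl_prod X f \<alpha> = (-1) ^ (\<Sum>k\<in>X. \<alpha> k) *\<^sub>R f \<alpha>"
proof -
  have "foldr (\<lambda>i g. refl i \<circ> g) L id f \<alpha> = (-1) ^ sum_list (map \<alpha> L) *\<^sub>R f \<alpha>" for L f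
    by (induction L arbitrary: f) (auto simp: refl_def power_add)
  moreover have "sum \<alpha> X = sum_list (map \<alpha> (sorted_list_of_set X))"
    by (cases "finite X") (simp_all add: sum_list_distinct_conv_sum_set)
  ultimately show ?thesis
    by (simp add: refl_prod_def)
qed

definition mul_lop :: "nat \<Rightarrow> 'v::real_vector lop" where
  "mul_lop i = Abs_lop (mulx i)"

definition dunkl_lop :: "(nat \<Rightarrow> real) \<Rightarrow> nat \<Rightarrow> 'v::real_vector lop" where
  "dunkl_lop \<mu> i = Abs_lop (dunkl \<mu> i)"

definition refl_prod_lop :: "nat set \<Rightarrow> 'v::real_vector lop" where
  "refl_prod_lop X = Abs_lop (refl_prod X)"

definition cliff_lop :: "(nat \<Rightarrow> 'v \<Rightarrow> 'v) \<Rightarrow> nat \<Rightarrow> 'v::real_vector lop" where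
  "cliff_lop e i = Abs_lop (cliff e i)"

lemma op_linear_mulx: "op_linear (mulx i)"
  and op_linear_dunkl: "op_linear (dunkl \<mu> i)"
  and op_linear_refl_prod: "op_linear (refl_prod X)"
  by (auto simp: op_linear_def mulx_def dunkl_eq refl_prod_eq fun_eq_iff algebra_simps)

lemma op_linear_cliff: "linear (e i) \<Longrightarrow> op_linear (cliff e i)"
  by (simp add: op_linear_def cliff_def fun_eq_iff linear_add linear_scale)

lemma rep_mul_lop: "rep (mul_lop i) = mulx i"
  and rep_dunkl_lop: "rep (dunkl_lop \<mu> i) = dunkl \<mu> i"
  and rep_refl_prod_lop: "rep (refl_prod_lop X) = refl_prod X"
  by (simp_all add: mul_lop_def dunkl_lop_def refl_prod_lop_def rep_Abs_lop
      op_linear_mulx op_linear_dunkl op_linear_refl_prod)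

lemma rep_cliff_lop: "linear (e i) \<Longrightarrow> rep (cliff_lop e i) = cliff e i"
  by (simp add: cliff_lop_def rep_Abs_lop op_linear_cliff)

lemmas rep_basic_simps = rep_mul_lop rep_dunkl_lop rep_refl_prod_lop mulx_def dunkl_eq refl_prod_eq

lemma mul_lop_commute: "commute (mul_lop i) (mul_lop j)"
  by (auto simp: commute_def intro!: lop_eqI simp: rep_simps rep_basic_simps fun_upd_twist)

lemma mul_dunkl_lop_commute: "i \<noteq> j \<Longrightarrow> commute (mul_lop i) (dunkl_lop \<mu> j)"
  by (auto simp: commute_def intro!: lop_eqI simp: rep_simps rep_basic_simps fun_upd_twist)

lemma dunkl_lop_commute: "i \<noteq> j \<Longrightarrow> commute (dunkl_lop \<mu> i) (dunkl_lop \<mu> j)"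
  by (auto simp: commute_def intro!: lop_eqI simp: rep_simps rep_basic_simps fun_upd_twist)

lemma refl_prod_lop_square: "refl_prod_lop X * refl_prod_lop X = 1"
  by (auto intro!: lop_eqI simp: rep_simps rep_basic_simps power_add[symmetric])

lemma refl_prod_lop_commute: "commute (refl_prod_lop X) (refl_prod_lop Y)"
  by (auto simp: commute_def intro!: lop_eqI simp: rep_simps rep_basic_simps)

lemma refl_prod_lop_union:
  "finite X \<Longrightarrow> finite Y \<Longrightarrow> X \<inter> Y = {} \<Longrightarrow> refl_prod_lop (X \<union> Y) = refl_prod_lop X * refl_prod_lop Y"
  by (auto intro!: lop_eqI simp: rep_simps rep_basic_simps sum.union_disjoint power_add)

lemma sum_fun_upd:
  "finite X \<Longrightarrow> (\<Sum>k\<in>X. if k = i then v else \<alpha> k) = (if i \<in> X then v + (\<Sum>k\<in>X - {i}. \<alpha> k) else (\<Sum>k\<in>X. \<alpha> k))"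
  by (auto simp: sum.remove intro!: sum.cong)

lemma refl_prod_lop_mul_lop:
  assumes "finite X"
  shows "refl_prod_lop X * mul_lop i = (if i \<in> X then - (mul_lop i * refl_prod_lop X) else mul_lop i * refl_prod_lop X)"
proof (rule lop_eqI)
  fix f :: "'a pv" and \<alpha>
  have "(-1::real) ^ (\<Sum>k\<in>X. \<alpha> k) = - ((-1) ^ (\<alpha> i - 1 + (\<Sum>k\<in>X - {i}. \<alpha> k)))" if "i \<in> X" "\<alpha> i \<noteq> 0"
    using that assms by (cases "\<alpha> i") (simp_all add: sum.remove)
  then show "rep (refl_prod_lop X * mul_lop i) f \<alpha>
      = rep (if i \<in> X then - (mul_lop i * refl_prod_lop X) else mul_lop i * refl_prod_lop X) f \<alpha>"
    using assms by (auto simp: rep_simps rep_basic_simps sum_fun_upd)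
qed

lemma refl_prod_lop_dunkl_lop:
  assumes "finite X"
  shows "refl_prod_lop X * dunkl_lop \<mu> i = (if i \<in> X then - (dunkl_lop \<mu> i * refl_prod_lop X) else dunkl_lop \<mu> i * refl_prod_lop X)"
  using assms by (auto intro!: lop_eqI simp: rep_simps rep_basic_simps sum_fun_upd sum.remove)

lemma dunkl_mul_lop_commutator:
  "dunkl_lop \<mu> i * mul_lop i - mul_lop i * dunkl_lop \<mu> i = 1 + (2 * \<mu> i) *\<^sub>R refl_prod_lop {i}"
  by (auto intro!: lop_eqI simp: rep_simps rep_basic_simps dunkl_coeff_def algebra_simps)

lemma cliff_lop_commute_mul_lop: "linear (e i) \<Longrightarrow> commute (cliff_lop e i) (mul_lop j)"
  by (auto simp: commute_def intro!: lop_eqI simp: rep_simps rep_basic_simps rep_cliff_lop cliff_def linear_0)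

lemma cliff_lop_commute_dunkl_lop: "linear (e i) \<Longrightarrow> commute (cliff_lop e i) (dunkl_lop \<mu> j)"
  by (auto simp: commute_def intro!: lop_eqI simp: rep_simps rep_basic_simps rep_cliff_lop cliff_def linear_scale)

lemma cliff_lop_commute_refl_prod_lop: "linear (e i) \<Longrightarrow> commute (cliff_lop e i) (refl_prod_lop X)"
  by (auto simp: commute_def intro!: lop_eqI simp: rep_simps rep_basic_simps rep_cliff_lop cliff_def linear_scale)

lemma cliff_lop_anticommutator:
  assumes "clifford_module n e" "i \<in> {1..n}" "j \<in> {1..n}"
  shows "cliff_lop e i * cliff_lop e j + cliff_lop e j * cliff_lop e i = (if i = j then (-2) *\<^sub>R 1 else 0)"
  using assms unfolding clifford_module_def
  by (auto intro!: lop_eqI simp: rep_simps rep_cliff_lop cliff_def)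

section \<open>The operators \<open>\<Gamma>\<^sub>A\<close>\<close>

locale clifford_dunkl =
  fixes n :: nat and \<mu> :: "nat \<Rightarrow> real" and e :: "nat \<Rightarrow> 'v::real_vector \<Rightarrow> 'v"
  assumes clifford: "clifford_module n e"
begin

abbreviation E :: "nat \<Rightarrow> 'v lop" where "E \<equiv> cliff_lop e"
abbreviation M :: "nat \<Rightarrow> 'v lop" where "M \<equiv> mul_lop"
abbreviation T :: "nat \<Rightarrow> 'v lop" where "T \<equiv> dunkl_lop \<mu>"
abbreviation r :: "nat set \<Rightarrow> 'v lop" where "r \<equiv> refl_prod_lop"

definition xvec_lop :: "nat set \<Rightarrow> 'v lop" where
  "xvec_lop X = (\<Sum>i\<in>X. E i * M i)"

definition dirac_lop :: "nat set \<Rightarrow> 'v lop" where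
  "dirac_lop X = (\<Sum>i\<in>X. E i * T i)"

definition S_lop :: "nat set \<Rightarrow> 'v lop" where
  "S_lop X = (1 / 2) *\<^sub>R (xvec_lop X * dirac_lop X - dirac_lop X * xvec_lop X - 1)"

definition Gamma_lop :: "nat set \<Rightarrow> 'v lop" where
  "Gamma_lop X = S_lop X * r X"

lemma linear_e: "i \<in> {1..n} \<Longrightarrow> linear (e i)"
  using clifford by (simp add: clifford_module_def)

lemma E_commute:
  assumes "i \<in> {1..n}"
  shows "commute (E i) (M j)" and "commute (E i) (T j)" and "commute (E i) (r Y)"
  using assms by (auto simp: linear_e cliff_lop_commute_mul_lop cliff_lop_commute_dunkl_lop
      cliff_lop_commute_refl_prod_lop)

lemma E_anticommute: "i \<in> {1..n} \<Longrightarrow> j \<in> {1..n} \<Longrightarrow> i \<noteq> j \<Longrightarrow> anticommute (E i) (E j)"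
  using cliff_lop_anticommutator[OF clifford, of i j] by (simp add: anticommute_def eq_neg_iff_add_eq_0)

lemma E_square: "i \<in> {1..n} \<Longrightarrow> E i * E i = - 1"
proof -
  assume "i \<in> {1..n}"
  then have "2 *\<^sub>R (E i * E i) = 2 *\<^sub>R (- 1)"
    using cliff_lop_anticommutator[OF clifford, of i i] by (simp flip: scaleR_2)
  then show ?thesis
    by (metis scaleR_cancel_left zero_neq_numeral)
qed

lemma even_commute:
  shows "commute (M i) (M k)" and "i \<noteq> k \<Longrightarrow> commute (M i) (T k)"
    and "i \<noteq> k \<Longrightarrow> commute (T i) (M k)" and "i \<noteq> k \<Longrightarrow> commute (T i) (T k)"
  by (simp_all add: mul_lop_commute mul_dunkl_lop_commute dunkl_lop_commute
      commute_sym[OF mul_dunkl_lop_commute])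

lemma odd_terms_anticommute:
  assumes "i \<in> {1..n}" "j \<in> {1..n}" "i \<noteq> j" "P \<in> {M i, T i}" "Q \<in> {M j, T j}"
  shows "anticommute (E i * P) (E j * Q)"
proof -
  have "commute Q P"
    using assms(3-5) by (auto simp: even_commute)
  moreover have "commute Q (E i)" and EP: "commute P (E j)"
    using E_commute[OF assms(1)] E_commute[OF assms(2)] assms(4,5) by (auto simp: commute_def)
  ultimately have "commute Q (E i * P)"
    by (blast intro: commute_mult)
  moreover have "anticommute (E i * P) (E j)"
    by (rule anticommute_sym, rule anticommute_mult_commute_left[OF E_anticommute commute_sym[OF EP]])
      (use assms in auto)
  ultimately show ?thesis
    by (blast intro: anticommute_mult_commute_left commute_sym)
qed

lemma odd_anticommute:
  assumes "X \<subseteq> {1..n}" "Y \<subseteq> {1..n}" "X \<inter> Y = {}"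
    and "a \<in> {xvec_lop X, dirac_lop X}" "b \<in> {xvec_lop Y, dirac_lop Y}"
  shows "anticommute a b"
  using assms unfolding xvec_lop_def dirac_lop_def
  by (auto intro!: anticommute_sum_sum odd_terms_anticommute)

lemma finite_indices: "X \<subseteq> {1..n} \<Longrightarrow> finite X"
  by (rule finite_subset) auto

lemma refl_prod_odd_term:
  assumes "i \<in> {1..n}" "finite Y" "P \<in> {M i, T i}"
  shows "i \<in> Y \<Longrightarrow> anticommute (r Y) (E i * P)" and "i \<notin> Y \<Longrightarrow> commute (r Y) (E i * P)"
proof -
  have "commute (r Y) (E i)"
    using assms(1) by (rule commute_sym[OF E_commute(3)])
  moreover have "i \<in> Y \<Longrightarrow> anticommute (r Y) P" "i \<notin> Y \<Longrightarrow> commute (r Y) P"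
    using assms(2,3) by (auto simp: anticommute_def commute_def refl_prod_lop_mul_lop refl_prod_lop_dunkl_lop)
  ultimately show "i \<in> Y \<Longrightarrow> anticommute (r Y) (E i * P)" "i \<notin> Y \<Longrightarrow> commute (r Y) (E i * P)"
    by (auto intro: anticommute_mult_commute_right commute_mult)
qed

lemma refl_prod_odd:
  assumes "X \<subseteq> {1..n}" "finite Y" "a \<in> {xvec_lop X, dirac_lop X}"
  shows "X \<subseteq> Y \<Longrightarrow> anticommute (r Y) a" and "X \<inter> Y = {} \<Longrightarrow> commute (r Y) a"
  using assms unfolding xvec_lop_def dirac_lop_def
  by (auto intro!: anticommute_sum commute_sum refl_prod_odd_term)

abbreviation N :: "nat \<Rightarrow> 'v lop" where
  "N k \<equiv> M k * T k + T k * M k"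

lemma xvec_dirac_anticommutator:
  assumes "X \<subseteq> {1..n}"
  shows "xvec_lop X * dirac_lop X + dirac_lop X * xvec_lop X = - (\<Sum>i\<in>X. N i)"
proof -
  have diagonal: "E i * M i * (E i * T i) + E i * T i * (E i * M i) = - N i"
    if "i \<in> X" for i
  proof -
    have i: "i \<in> {1..n}"
      using that assms by auto
    have ME: "M i * E i = E i * M i" and TE: "T i * E i = E i * T i"
      using E_commute[OF i] by (simp_all add: commute_def)
    have "E i * M i * (E i * T i) = (E i * E i) * (M i * T i)"
      using ME by (metis mult.assoc)
    moreover have "E i * T i * (E i * M i) = (E i * E i) * (T i * M i)"
      using TE by (metis mult.assoc)
    ultimately show ?thesis
      by (simp add: E_square[OF i])
  qed
  have "xvec_lop X * dirac_lop X + dirac_lop X * xvec_lop X = (\<Sum>i\<in>X. E i * M i * (E i * T i) + E i * T i * (E i * M i))"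
    unfolding xvec_lop_def dirac_lop_def
  proof (rule sum_anticommutator_diagonal)
    fix i j assume "i \<in> X" "j \<in> X" "i \<noteq> j"
    with assms have "anticommute (E i * M i) (E j * T j)"
      by (intro odd_terms_anticommute) auto
    then show "E i * M i * (E j * T j) + E j * T j * (E i * M i) = 0"
      by (simp add: anticommute_def)
  qed (rule finite_indices[OF assms])
  also have "\<dots> = - (\<Sum>i\<in>X. N i)"
    by (simp add: diagonal flip: sum_negf)
  finally show ?thesis .
qed

lemma N_commutator:
  shows "N i * M i - M i * N i = M i + M i" and "T i * N i - N i * T i = T i + T i"
proof -
  have "T i * M i - M i * T i = 1 + (2 * \<mu> i) *\<^sub>R r {i}"
    by (rule dunkl_mul_lop_commutator)
  moreover have "anticommute ((2 * \<mu> i) *\<^sub>R r {i}) (M i)"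
    and "anticommute ((2 * \<mu> i) *\<^sub>R r {i}) (T i)"
    by (simp_all add: anticommute_def refl_prod_lop_mul_lop refl_prod_lop_dunkl_lop)
  ultimately show "N i * M i - M i * N i = M i + M i" "T i * N i - N i * T i = T i + T i"
    by (rule sl2_relations(1), rule sl2_relations(2))
qed

lemma N_sum_commutator:
  assumes "X \<subseteq> {1..n}" "i \<in> X"
  shows "(\<Sum>k\<in>X. N k) * (E i * M i) - E i * M i * (\<Sum>k\<in>X. N k) = E i * M i + E i * M i"
    and "E i * T i * (\<Sum>k\<in>X. N k) - (\<Sum>k\<in>X. N k) * (E i * T i) = E i * T i + E i * T i"
proof -
  have i: "i \<in> {1..n}" and fin: "finite X"
    using assms finite_indices by auto
  have "commute (E i) (N k)" for k
    using E_commute[OF i] by (intro commute_add commute_mult)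
  then have "commute (E i) (\<Sum>k\<in>X. N k)"
    by (rule commute_sum)
  then have EN: "E i * (\<Sum>k\<in>X. N k) = (\<Sum>k\<in>X. N k) * E i"
    by (simp add: commute_def)
  have M_N: "commute (M i) (N k)" and T_N: "commute (T i) (N k)" if "k \<noteq> i" for k
    using that by (intro commute_add commute_mult even_commute; simp)+
  have sum_M: "(\<Sum>k\<in>X. N k) * M i - M i * (\<Sum>k\<in>X. N k) = N i * M i - M i * N i"
    by (rule commutator_sum_single[OF fin assms(2) M_N])
  have sum_T: "(\<Sum>k\<in>X. N k) * T i - T i * (\<Sum>k\<in>X. N k) = N i * T i - T i * N i"
    by (rule commutator_sum_single[OF fin assms(2) T_N])
  have NM: "(\<Sum>k\<in>X. N k) * M i - M i * (\<Sum>k\<in>X. N k) = M i + M i"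
    unfolding sum_M by (rule N_commutator(1))
  have "T i * (\<Sum>k\<in>X. N k) - (\<Sum>k\<in>X. N k) * T i = - ((\<Sum>k\<in>X. N k) * T i - T i * (\<Sum>k\<in>X. N k))"
    by (rule minus_diff_eq[symmetric])
  also have "\<dots> = T i + T i"
    unfolding sum_T minus_diff_eq by (rule N_commutator(2))
  finally have TN: "T i * (\<Sum>k\<in>X. N k) - (\<Sum>k\<in>X. N k) * T i = T i + T i" .
  have NE: "(\<Sum>k\<in>X. N k) * (E i * P) = E i * ((\<Sum>k\<in>X. N k) * P)" for P
    by (simp only: mult.assoc[symmetric] EN)
  show "(\<Sum>k\<in>X. N k) * (E i * M i) - E i * M i * (\<Sum>k\<in>X. N k) = E i * M i + E i * M i"
    unfolding NE mult.assoc right_diff_distrib[symmetric] NM by (rule distrib_left)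
  show "E i * T i * (\<Sum>k\<in>X. N k) - (\<Sum>k\<in>X. N k) * (E i * T i) = E i * T i + E i * T i"
    unfolding NE mult.assoc right_diff_distrib[symmetric] TN by (rule distrib_left)
qed

lemma xvec_osp:
  assumes "X \<subseteq> {1..n}"
  shows "xvec_lop X * (xvec_lop X * dirac_lop X - dirac_lop X * xvec_lop X)
      + (xvec_lop X * dirac_lop X - dirac_lop X * xvec_lop X) * xvec_lop X = xvec_lop X + xvec_lop X"
proof -
  let ?x = "xvec_lop X" and ?D = "dirac_lop X" and ?N = "\<Sum>k\<in>X. N k"
  have "?x * (?x * ?D - ?D * ?x) + (?x * ?D - ?D * ?x) * ?x = ?x * (?x * ?D + ?D * ?x) - (?x * ?D + ?D * ?x) * ?x"
    by (simp add: algebra_simps)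
  also have "\<dots> = ?N * ?x - ?x * ?N"
    unfolding xvec_dirac_anticommutator[OF assms] by simp
  also have "\<dots> = (\<Sum>i\<in>X. ?N * (E i * M i) - E i * M i * ?N)"
    unfolding xvec_lop_def sum_distrib_left[of ?N] sum_distrib_right[where r = ?N] sum_subtractf ..
  also have "\<dots> = ?x + ?x"
    using assms by (simp add: N_sum_commutator(1) xvec_lop_def flip: sum.distrib)
  finally show ?thesis .
qed

lemma dirac_osp:
  assumes "X \<subseteq> {1..n}"
  shows "dirac_lop X * (xvec_lop X * dirac_lop X - dirac_lop X * xvec_lop X)
      + (xvec_lop X * dirac_lop X - dirac_lop X * xvec_lop X) * dirac_lop X = dirac_lop X + dirac_lop X"
proof -
  let ?x = "xvec_lop X" and ?D = "dirac_lop X" and ?N = "\<Sum>k\<in>X. N k"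
  have "?D * (?x * ?D - ?D * ?x) + (?x * ?D - ?D * ?x) * ?D = (?x * ?D + ?D * ?x) * ?D - ?D * (?x * ?D + ?D * ?x)"
    by (simp add: algebra_simps)
  also have "\<dots> = ?D * ?N - ?N * ?D"
    unfolding xvec_dirac_anticommutator[OF assms] by simp
  also have "\<dots> = (\<Sum>i\<in>X. E i * T i * ?N - ?N * (E i * T i))"
    unfolding dirac_lop_def sum_distrib_left[of ?N] sum_distrib_right[where r = ?N] sum_subtractf ..
  also have "\<dots> = ?D + ?D"
    using assms by (simp add: N_sum_commutator(2) dirac_lop_def flip: sum.distrib)
  finally show ?thesis .
qed

abbreviation G :: "nat set \<Rightarrow> 'v lop" where
  "G X \<equiv> twice_gamma (xvec_lop X) (dirac_lop X) (r X)"

lemma gamma_block_lop: "X \<subseteq> {1..n} \<Longrightarrow> gamma_block (G X) (xvec_lop X) (dirac_lop X) (r X)"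
  by (rule gamma_block_twice_gamma)
    (simp_all add: refl_prod_lop_square refl_prod_odd(1) finite_indices xvec_osp dirac_osp)

lemma gamma_block_pair_lop:
  assumes "X \<subseteq> {1..n}" "Y \<subseteq> {1..n}" "X \<inter> Y = {}"
  shows "gamma_block_pair (G X) (xvec_lop X) (dirac_lop X) (r X) (G Y) (xvec_lop Y) (dirac_lop Y) (r Y)"
proof -
  have "Y \<inter> X = {}"
    using assms(3) by blast
  then show ?thesis
    using assms by (intro gamma_block_pair_twice_gamma)
      (simp_all add: odd_anticommute refl_prod_odd(2) refl_prod_lop_commute finite_indices)
qed

lemma xvec_lop_union: "finite X \<Longrightarrow> finite Y \<Longrightarrow> X \<inter> Y = {} \<Longrightarrow> xvec_lop (X \<union> Y) = xvec_lop X + xvec_lop Y"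
  and dirac_lop_union: "finite X \<Longrightarrow> finite Y \<Longrightarrow> X \<inter> Y = {} \<Longrightarrow> dirac_lop (X \<union> Y) = dirac_lop X + dirac_lop Y"
  by (simp_all add: xvec_lop_def dirac_lop_def sum.union_disjoint)

lemma G_eq_Gamma_lop: "G X = 2 *\<^sub>R Gamma_lop X"
  by (simp add: Gamma_lop_def S_lop_def twice_gamma_def)

lemma Gamma_lop_racah:
  assumes "X \<subseteq> {1..n}" "Y \<subseteq> {1..n}" "Z \<subseteq> {1..n}" "X \<inter> Y = {}" "X \<inter> Z = {}" "Y \<inter> Z = {}"
  shows "Gamma_lop (Y \<union> Z) * Gamma_lop (X \<union> Y) + Gamma_lop (X \<union> Y) * Gamma_lop (Y \<union> Z)
      = Gamma_lop (X \<union> Z) + 2 *\<^sub>R (Gamma_lop Y * Gamma_lop (X \<union> Y \<union> Z) + Gamma_lop X * Gamma_lop Z)"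
proof -
  interpret gamma_block_triple "G X" "xvec_lop X" "dirac_lop X" "r X" "G Y" "xvec_lop Y" "dirac_lop Y" "r Y"
    "G Z" "xvec_lop Z" "dirac_lop Z" "r Z"
    using assms by (simp add: gamma_block_triple_def gamma_block_lop gamma_block_pair_lop)
  have "finite X" "finite Y" "finite Z" "(X \<union> Y) \<inter> Z = {}"
    using assms finite_indices by auto
  then have "G (Y \<union> Z) * G (X \<union> Y) + G (X \<union> Y) * G (Y \<union> Z)
      = G (X \<union> Z) + G (X \<union> Z) + G Y * G (X \<union> Y \<union> Z) + G Y * G (X \<union> Y \<union> Z) + G X * G Z + G X * G Z"
    using racah_relation assms
    by (simp add: xvec_lop_union dirac_lop_union refl_prod_lop_union)
  then have "4 *\<^sub>R (Gamma_lop (Y \<union> Z) * Gamma_lop (X \<union> Y) + Gamma_lop (X \<union> Y) * Gamma_lop (Y \<union> Z))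
      = 4 *\<^sub>R (Gamma_lop (X \<union> Z) + 2 *\<^sub>R (Gamma_lop Y * Gamma_lop (X \<union> Y \<union> Z) + Gamma_lop X * Gamma_lop Z))"
    by (simp add: G_eq_Gamma_lop algebra_simps flip: scaleR_add_left)
  then show ?thesis
    by simp
qed

lemma G_commute_odd:
  assumes "X \<subseteq> {1..n}" "Y \<subseteq> {1..n}" "X \<subseteq> Y \<or> X \<inter> Y = {}"
  shows "commute (G X) (xvec_lop Y)" and "commute (G X) (dirac_lop Y)" and "commute (G X) (r Y)"
proof -
  have outside: "commute (G X) (xvec_lop Z) \<and> commute (G X) (dirac_lop Z) \<and> commute (G X) (r Z)"
    if "Z \<subseteq> {1..n}" "Z \<inter> X = {}" for Z
  proof -
    interpret gamma_block_pair "G Z" "xvec_lop Z" "dirac_lop Z" "r Z" "G X" "xvec_lop X" "dirac_lop X" "r X"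
      using that assms(1) by (intro gamma_block_pair_lop)
    show ?thesis
      by (simp add: commute_def g'_x g'_d g'_r)
  qed
  have "commute (G X) (xvec_lop Y) \<and> commute (G X) (dirac_lop Y) \<and> commute (G X) (r Y)"
    using assms(3)
  proof (elim disjE)
    assume "X \<subseteq> Y"
    then have Y: "Y = X \<union> (Y - X)" and "Y - X \<subseteq> {1..n}" "(Y - X) \<inter> X = {}"
      using assms(2) by auto
    interpret gamma_block "G X" "xvec_lop X" "dirac_lop X" "r X"
      using assms(1) by (rule gamma_block_lop)
    have "finite X" "finite (Y - X)" "X \<inter> (Y - X) = {}"
      using assms finite_indices by auto
    then have "xvec_lop (X \<union> (Y - X)) = xvec_lop X + xvec_lop (Y - X)"
      "dirac_lop (X \<union> (Y - X)) = dirac_lop X + dirac_lop (Y - X)" "r (X \<union> (Y - X)) = r X * r (Y - X)"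
      by (simp_all only: xvec_lop_union dirac_lop_union refl_prod_lop_union)
    then have "xvec_lop Y = xvec_lop X + xvec_lop (Y - X)" "dirac_lop Y = dirac_lop X + dirac_lop (Y - X)"
      "r Y = r X * r (Y - X)"
      unfolding Y[symmetric] .
    moreover have "commute (G X) (xvec_lop X)" "commute (G X) (dirac_lop X)" "commute (G X) (r X)"
      by (simp_all add: commute_def x_g d_g r_g)
    ultimately show ?thesis
      using outside[of "Y - X"] \<open>Y - X \<subseteq> {1..n}\<close> \<open>(Y - X) \<inter> X = {}\<close>
      by (simp add: commute_add commute_mult)
  next
    assume "X \<inter> Y = {}"
    then show ?thesis
      using outside[of Y] assms(2) by (simp add: inf_commute)
  qed
  then show "commute (G X) (xvec_lop Y)" "commute (G X) (dirac_lop Y)" "commute (G X) (r Y)"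
    by simp_all
qed

lemma Gamma_lop_commute:
  assumes "X \<subseteq> {1..n}" "Y \<subseteq> {1..n}" "X \<subseteq> Y \<or> Y \<subseteq> X \<or> X \<inter> Y = {}"
  shows "commute (Gamma_lop X) (Gamma_lop Y)"
proof -
  have "commute (G X) (G Y)" if "X \<subseteq> {1..n}" "Y \<subseteq> {1..n}" "X \<subseteq> Y \<or> X \<inter> Y = {}" for X Y
    using G_commute_odd[OF that] by (rule commute_twice_gamma)
  then have "commute (G X) (G Y)"
    using assms by (metis commute_sym inf_commute)
  then show ?thesis
    by (simp add: G_eq_Gamma_lop commute_def)
qed

lemma rep_Gamma_lop:
  assumes "X \<subseteq> {1..n}"
  shows "rep (Gamma_lop X) = Gamma \<mu> e X"
proof -
  have "rep (xvec_lop X) = xvec e X" "rep (dirac_lop X) = dirac \<mu> e X"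
    using assms linear_e
    by (auto simp: fun_eq_iff xvec_lop_def dirac_lop_def xvec_def dirac_def rep_sum rep_mult
        rep_cliff_lop rep_mul_lop rep_dunkl_lop subset_iff intro!: sum.cong)
  then show ?thesis
    by (intro ext) (simp add: Gamma_lop_def S_lop_def Gamma_def S_op_def commutator_def op_minus_def
        op_scale_def rep_simps rep_refl_prod_lop)
qed

definition K_lop :: "real \<Rightarrow> nat \<Rightarrow> 'v lop" where
  "K_lop s l =
     (Gamma_lop {l+1, l+2} + s *\<^sub>R Gamma_lop ({1..l+2} - {l+1})) * (Gamma_lop {1..l+1} - (s / 2) *\<^sub>R 1)
     - (Gamma_lop {l+2} + s *\<^sub>R Gamma_lop {1..l+2}) * (Gamma_lop {1..l} + s *\<^sub>R Gamma_lop {l+1})"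

lemma rep_K_lop: "l + 2 \<le> n \<Longrightarrow> rep (K_lop s l) = K_op \<mu> e s l"
  by (simp add: fun_eq_iff K_lop_def K_op_def op_minus_def op_plus_def op_scale_def rep_simps
      rep_Gamma_lop subset_iff)

lemma K_lop_commute:
  assumes "l + 2 \<le> n" "j \<in> {1..n}" "j \<noteq> l + 1"
  shows "commute (Gamma_lop {1..j}) (K_lop s l)"
proof -
  have "commute (Gamma_lop {1..j}) (Gamma_lop Z)"
    if "Z \<in> {{l+1, l+2}, {1..l+2} - {l+1}, {1..l+1}, {l+2}, {1..l+2}, {1..l}, {l+1}}" for Z
  proof (rule Gamma_lop_commute)
    show "{1..j} \<subseteq> {1..n}" "Z \<subseteq> {1..n}"
      using assms that by auto
    show "{1..j} \<subseteq> Z \<or> Z \<subseteq> {1..j} \<or> {1..j} \<inter> Z = {}"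
      using assms that by (cases "j \<le> l") auto
  qed
  then show ?thesis
    unfolding K_lop_def by (intro commute_diff commute_mult commute_add commute_scaleR commute_one) auto
qed

lemma K_lop_anticommutator:
  assumes "l + 2 \<le> n" "s * s = 1"
  shows "K_lop s l * Gamma_lop {1..l+1} + Gamma_lop {1..l+1} * K_lop s l = s *\<^sub>R K_lop s l"
proof -
  have sets: "{l+1} \<union> {l+2} = {l+1, l+2}" "{1..l} \<union> {l+1} = {1..l+1}" "{l+1} \<union> {1..l} = {1..l+1}"
    "{1..l} \<union> {l+2} = {1..l+2} - {l+1}" "{1..l+1} \<union> {l+2} = {1..l+2}"
    by auto
  have sub: "{1..l} \<subseteq> {1..n}" "{l+1} \<subseteq> {1..n}" "{l+2} \<subseteq> {1..n}"
    using assms by auto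
  have disj: "{1..l} \<inter> {l+1} = {}" "{1..l} \<inter> {l+2} = {}" "{l+1} \<inter> {l+2} = {}" "{l+1} \<inter> {1..l} = {}"
    by auto
  have commute: "commute (Gamma_lop X) (Gamma_lop Y)"
    if "X \<subseteq> {1..l+2}" "Y \<subseteq> {1..l+2}" "X \<subseteq> Y \<or> Y \<subseteq> X \<or> X \<inter> Y = {}" for X Y
    using that assms(1) by (intro Gamma_lop_commute) auto
  have R1: "Gamma_lop {l+1, l+2} * Gamma_lop {1..l+1} + Gamma_lop {1..l+1} * Gamma_lop {l+1, l+2}
      = Gamma_lop ({1..l+2} - {l+1}) + 2 *\<^sub>R (Gamma_lop {l+1} * Gamma_lop {1..l+2} + Gamma_lop {1..l} * Gamma_lop {l+2})"
    using Gamma_lop_racah[OF sub disj(1-3)] unfolding sets .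
  have R2: "Gamma_lop ({1..l+2} - {l+1}) * Gamma_lop {1..l+1} + Gamma_lop {1..l+1} * Gamma_lop ({1..l+2} - {l+1})
      = Gamma_lop {l+1, l+2} + 2 *\<^sub>R (Gamma_lop {1..l} * Gamma_lop {1..l+2} + Gamma_lop {l+1} * Gamma_lop {l+2})"
    using Gamma_lop_racah[OF sub(2,1,3) disj(4,3,2)] unfolding sets .
  show ?thesis
    unfolding K_lop_def
    by (rule anticommutator_K[OF assms(2) R1 R2]; rule commute; auto)
qed

lemma K_op_commutator:
  assumes "l + 2 \<le> n" "j \<in> {1..n}" "j \<noteq> l + 1"
  shows "commutator (K_op \<mu> e s l) (Gamma \<mu> e {1..j}) = (\<lambda>f \<alpha>. 0)"
proof -
  have "commutator (K_op \<mu> e s l) (Gamma \<mu> e {1..j})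
      = rep (K_lop s l * Gamma_lop {1..j} - Gamma_lop {1..j} * K_lop s l)"
    using assms by (simp add: rep_K_lop[symmetric] rep_Gamma_lop[symmetric] commutator_rep)
  then show ?thesis
    using K_lop_commute[OF assms] by (simp add: commute_def rep_zero)
qed

lemma K_op_anticommutator:
  assumes "l + 2 \<le> n" "s * s = 1"
  shows "anticommutator (K_op \<mu> e s l) (Gamma \<mu> e {1..l+1}) = op_scale s (K_op \<mu> e s l)"
proof -
  have "anticommutator (K_op \<mu> e s l) (Gamma \<mu> e {1..l+1})
      = rep (K_lop s l * Gamma_lop {1..l+1} + Gamma_lop {1..l+1} * K_lop s l)"
    using assms(1) by (simp add: rep_K_lop[symmetric] rep_Gamma_lop[symmetric] anticommutator_rep)
  also have "\<dots> = op_scale s (K_op \<mu> e s l)"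
    by (simp only: K_lop_anticommutator[OF assms] op_scale_rep rep_K_lop[OF assms(1), symmetric])
  finally show ?thesis .
qed

end

theorem proposition9:
  fixes n l :: nat and \<mu> :: "nat \<Rightarrow> real" and e :: "nat \<Rightarrow> 'v::real_vector \<Rightarrow> 'v" and s :: real
  assumes "n \<ge> 3" and "l \<in> {1..n-2}"
    and "\<forall>i\<in>{1..n}. \<mu> i > 0"
    and "clifford_module n e"
    and "s = 1 \<or> s = -1"
  shows "(\<forall>j\<in>{1..n}. j \<noteq> l + 1 \<longrightarrow>
            (\<forall>f\<in>poly_space n. commutator (K_op \<mu> e s l) (Gamma \<mu> e {1..j}) f = (\<lambda>\<alpha>. 0)))
       \<and> (\<forall>f\<in>poly_space n.
            anticommutator (K_op \<mu> e s l) (Gamma \<mu> e {1..l+1}) f = op_scale s (K_op \<mu> e s l) f)"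
proof -
  interpret clifford_dunkl n \<mu> e
    by unfold_locales (rule assms(4))
  have "l + 2 \<le> n" and "s * s = 1"
    using assms(1,2,5) by auto
  \<comment> \<open>The identities hold on all coefficient maps and for arbitrary real \<open>\<mu>\<close>.\<close>
  then show ?thesis
    using K_op_commutator[of l _ s] K_op_anticommutator[of l s] by auto
qed

end
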